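(* Let $T$ be a tree of order $n(T)\geq 3$ with $l(T)$ leaves, and suppose $(T,S)\in\mathscr{T}_1$ for some labeling $S=(S_A,S_B,S_C,S_D)$. Then $\gamma^{d}_2(T)=|S_A|=\frac{n(T)-l(T)+3}{4}$, and $S_A$ is the unique $\gamma^{d}_2$-set of $T$.
   Context: Graphs are finite and simple. For a vertex $v$ of a graph $G$, $N(v)$ is its open neighborhood, $N[v]=N(v)\cup\{v\}$, $d(v)=|N(v)|$, and $d(u,v)$ denotes distance. A leaf is a vertex of degree $1$; a support vertex is a vertex adjacent to a leaf. For a tree $T$, $l(T)$ and $s(T)$ denote the numbers of leaves and of support vertices, and $n(T)$ its order. A set $D\subseteq V(G)$ is a disjunctive dominating set ($2DD$-set) of $G$ if every vertex $v\notin D$ either has a neighbor in $D$ or has at least two vertices of $D$ at distance exactly $2$ from it. The disjunctive domination number $\gamma^{d}_2(G)$ is the minimum size of a $2DD$-set; a $2DD$-set of that size is a $\gamma^d_2$-set. Labeled trees: a labeling of a tree $T$ is a partition $S=(S_A,S_B,S_C,S_D)$ of $V(T)$ into four (possibly empty) sets; the status $\mathrm{sta}(v)\in\{A,B,C,D\}$ is the letter $x$ with $v\in S_x$. Operation $\mathscr{O}_1$: choose a vertex $v$ with $\mathrm{sta}(v)=A$; add a new vertex $u$ and the edge $uv$, with $\mathrm{sta}(u)=C$. Operation $\mathscr{O}_3$: choose a vertex $v$ with $\mathrm{sta}(v)=C$ and $d(v)=1$; add a new path $u_1u_2u_3u_4$ and the edge $u_1v$, with $\mathrm{sta}(u_1)=D$,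 $\mathrm{sta}(u_2)=B$, $\mathrm{sta}(u_3)=A$, $\mathrm{sta}(u_4)=C$. (Existing vertices keep their statuses.) $\mathscr{T}_1$ is the smallest family of labeled trees that contains $(P_3,S')$, where $S'$ gives both leaves of $P_3$ status $C$ and the central vertex status $A$, and is closed under $\mathscr{O}_1$ and $\mathscr{O}_3$. *)

theory Defs
  imports Complex_Main
begin

definition simple_graph :: "'a set \<Rightarrow> 'a set set \<Rightarrow> bool" where
  "simple_graph V E \<longleftrightarrow> finite V \<and> (\<forall>e\<in>E. \<exists>u v. u \<in> V \<and> v \<in> V \<and> u \<noteq> v \<and> e = {u, v})"

definition adj :: "'a set set \<Rightarrow> 'a \<Rightarrow> 'a \<Rightarrow> bool" where
  "adj E u v \<longleftrightarrow> {u, v} \<in> E"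

definition nbhd :: "'a set set \<Rightarrow> 'a \<Rightarrow> 'a set" where
  "nbhd E v = {u. adj E v u}"

definition deg :: "'a set set \<Rightarrow> 'a \<Rightarrow> nat" where
  "deg E v = card (nbhd E v)"

definition connected_graph :: "'a set \<Rightarrow> 'a set set \<Rightarrow> bool" where
  "connected_graph V E \<longleftrightarrow>
     (\<forall>u\<in>V. \<forall>v\<in>V. (u, v) \<in> ({(x, y). x \<in> V \<and> y \<in> V \<and> adj E x y})\<^sup>*)"

definition is_tree :: "'a set \<Rightarrow> 'a set set \<Rightarrow> bool" where
  "is_tree V E \<longleftrightarrow> simple_graph V E \<and> V \<noteq> {} \<and> connected_graph V E \<and> card E + 1 = card V"

definition leaves :: "'a set \<Rightarrow> 'a set set \<Rightarrow> 'a set" where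
  "leaves V E = {v \<in> V. deg E v = 1}"

definition dist2 :: "'a set \<Rightarrow> 'a set set \<Rightarrow> 'a \<Rightarrow> 'a \<Rightarrow> bool" where
  "dist2 V E u w \<longleftrightarrow> u \<noteq> w \<and> \<not> adj E u w \<and> (\<exists>x\<in>V. adj E u x \<and> adj E x w)"

definition is_2DD :: "'a set \<Rightarrow> 'a set set \<Rightarrow> 'a set \<Rightarrow> bool" where
  "is_2DD V E D \<longleftrightarrow> D \<subseteq> V \<and>
     (\<forall>v\<in>V - D. (\<exists>u\<in>D. adj E v u) \<or> card {w \<in> D. dist2 V E v w} \<ge> 2)"

definition gamma_d2 :: "'a set \<Rightarrow> 'a set set \<Rightarrow> nat" where
  "gamma_d2 V E = Min {card D | D. is_2DD V E D}"

definition is_gamma_d2_set :: "'a set \<Rightarrow> 'a set set \<Rightarrow> 'a set \<Rightarrow> bool" where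
  "is_gamma_d2_set V E D \<longleftrightarrow> is_2DD V E D \<and> card D = gamma_d2 V E"

datatype status = SA | SB | SC | SD

text \<open>Labeled trees (V, E, sta); only the values of sta on V matter.\<close>
inductive T1 :: "'a set \<Rightarrow> 'a set set \<Rightarrow> ('a \<Rightarrow> status) \<Rightarrow> bool" where
  base: "\<lbrakk> distinct [a, b, c]; sta a = SC; sta b = SA; sta c = SC \<rbrakk>
         \<Longrightarrow> T1 {a, b, c} {{a, b}, {b, c}} sta"
| op1: "\<lbrakk> T1 V E sta; v \<in> V; sta v = SA; u \<notin> V;
          \<forall>x\<in>V. sta' x = sta x; sta' u = SC \<rbrakk>
         \<Longrightarrow> T1 (insert u V) (insert {u, v} E) sta'"
| op3: "\<lbrakk> T1 V E sta; v \<in> V; sta v = SC; deg E v = 1;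
          distinct [u1, u2, u3, u4]; u1 \<notin> V; u2 \<notin> V; u3 \<notin> V; u4 \<notin> V;
          \<forall>x\<in>V. sta' x = sta x;
          sta' u1 = SD; sta' u2 = SB; sta' u3 = SA; sta' u4 = SC \<rbrakk>
         \<Longrightarrow> T1 (V \<union> {u1, u2, u3, u4}) (E \<union> {{u1, v}, {u1, u2}, {u2, u3}, {u3, u4}}) sta'"

end

theory Submission
  imports Defs
begin

text \<open>Every tree of \<open>\<T>\<^sub>1\<close> arises from \<open>P\<^sub>3\<close> by hanging a leaf on an A-vertex (\<open>\<O>\<^sub>1\<close>)
  or a path \<open>u\<^sub>1u\<^sub>2u\<^sub>3u\<^sub>4\<close> on a C-leaf (\<open>\<O>\<^sub>3\<close>). Along this construction one
  maintains that \<open>S\<^sub>A\<close> is the unique minimum 2DD-set, that every A-vertex \<open>x\<close> has a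
  neighbour \<open>w \<notin> S\<^sub>A\<close> having \<open>x\<close> as its only A-vertex within distance 2, and that every
  C-vertex has an A-neighbour. The new vertices of either operation meet the old tree only in
  the attachment vertex \<open>v\<close>, so a 2DD-set of the new tree, with its new vertices close to
  \<open>v\<close> traded for \<open>v\<close> itself, is a 2DD-set of the old tree that is smaller by at least
  the number of new A-vertices; a competitor of the same size would leave the private
  neighbour of \<open>v\<close> (for \<open>\<O>\<^sub>1\<close>) or the vertex \<open>u\<^sub>2\<close> (for \<open>\<O>\<^sub>3\<close>) undominated.
  The identity \<open>n + 3 = 4 |S\<^sub>A| + l\<close> holds for \<open>P\<^sub>3\<close> and is preserved: \<open>\<O>\<^sub>1\<close> adds a
  vertex and a leaf, \<open>\<O>\<^sub>3\<close> adds four vertices and one A-vertex and moves a leaf.\<close>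

section \<open>Disjunctive domination\<close>

definition edges_within :: "'a set \<Rightarrow> 'a set set \<Rightarrow> bool" where
  "edges_within V E \<longleftrightarrow> (\<forall>x y. adj E x y \<longrightarrow> x \<in> V \<and> y \<in> V \<and> x \<noteq> y)"

lemma edges_withinD:
  "edges_within V E \<Longrightarrow> adj E x y \<Longrightarrow> x \<in> V \<and> y \<in> V \<and> x \<noteq> y"
  unfolding edges_within_def by blast

lemma adj_sym: "adj E x y \<longleftrightarrow> adj E y x"
  by (simp add: adj_def insert_commute)

lemma adj_insert:
  "adj (insert {a, b} E) x y \<longleftrightarrow> adj E x y \<or> (x = a \<and> y = b) \<or> (x = b \<and> y = a)"
  by (auto simp: adj_def doubleton_eq_iff)

lemma finite_nbhd: "edges_within V E \<Longrightarrow> finite V \<Longrightarrow> finite (nbhd E x)"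
  unfolding nbhd_def by (rule finite_subset[of _ V]) (auto dest: edges_withinD)

definition near :: "'a set set \<Rightarrow> 'a \<Rightarrow> 'a \<Rightarrow> bool" where
  "near E a b \<longleftrightarrow> adj E a b \<or> (\<exists>z. adj E a z \<and> adj E z b)"

lemma dist2_imp_near: "dist2 V E a b \<Longrightarrow> near E a b"
  unfolding dist2_def near_def by blast

definition disj_dominated :: "'a set \<Rightarrow> 'a set set \<Rightarrow> 'a set \<Rightarrow> 'a \<Rightarrow> bool" where
  "disj_dominated V E D x \<longleftrightarrow> (\<exists>y\<in>D. adj E x y) \<or> 2 \<le> card {w \<in> D. dist2 V E x w}"

lemma is_2DD_iff: "is_2DD V E D \<longleftrightarrow> D \<subseteq> V \<and> (\<forall>x\<in>V - D. disj_dominated V E D x)"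
  unfolding is_2DD_def disj_dominated_def by auto

lemma is_2DD_finite: "finite V \<Longrightarrow> is_2DD V E D \<Longrightarrow> finite D"
  unfolding is_2DD_def using finite_subset by blast

lemma disj_dominated_transfer:
  assumes "disj_dominated V E D x"
    and "\<And>y. y \<in> D \<Longrightarrow> adj E x y \<Longrightarrow> \<exists>y'\<in>D'. adj E' x y'"
    and "{w \<in> D. dist2 V E x w} \<subseteq> {w \<in> D'. dist2 V' E' x w}"
    and "finite D'"
  shows "disj_dominated V' E' D' x"
proof -
  have "card {w \<in> D. dist2 V E x w} \<le> card {w \<in> D'. dist2 V' E' x w}"
    using assms(3,4) by (intro card_mono) auto
  then show ?thesis
    using assms(1,2) unfolding disj_dominated_def by fastforce
qed

lemma disj_dominated_mono:
  "disj_dominated V E D x \<Longrightarrow> D \<subseteq> D' \<Longrightarrow> finite D' \<Longrightarrow> disj_dominated V E D' x"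
  by (erule disj_dominated_transfer) auto

lemma not_disj_dominated:
  assumes "\<forall>y\<in>D. \<not> adj E x y" and "{w \<in> D. dist2 V E x w} \<subseteq> {z}"
  shows "\<not> disj_dominated V E D x"
proof -
  have "card {w \<in> D. dist2 V E x w} \<le> card {z}"
    using assms(2) by (intro card_mono) auto
  then show ?thesis
    using assms(1) unfolding disj_dominated_def by auto
qed

definition unique_min_2DD :: "'a set \<Rightarrow> 'a set set \<Rightarrow> 'a set \<Rightarrow> bool" where
  "unique_min_2DD V E S \<longleftrightarrow> is_2DD V E S \<and>
     (\<forall>D. is_2DD V E D \<longrightarrow> card S \<le> card D \<and> (card D = card S \<longrightarrow> D = S))"

lemma unique_min_2DDI:
  assumes "is_2DD V E S"
    and "\<And>D. is_2DD V E D \<Longrightarrow> card S \<le> card D"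
    and "\<And>D. is_2DD V E D \<Longrightarrow> card D = card S \<Longrightarrow> D = S"
  shows "unique_min_2DD V E S"
  using assms unfolding unique_min_2DD_def by blast

lemma gamma_d2_unique_min:
  assumes "finite V" and "unique_min_2DD V E S"
  shows "gamma_d2 V E = card S" and "is_gamma_d2_set V E D \<longleftrightarrow> D = S"
proof -
  have "{card D | D. is_2DD V E D} \<subseteq> {..card V}"
    using assms(1) card_mono unfolding is_2DD_def by fastforce
  then have "finite {card D | D. is_2DD V E D}"
    by (rule finite_subset) simp
  then show g: "gamma_d2 V E = card S"
    unfolding gamma_d2_def using assms(2) unfolding unique_min_2DD_def
    by (intro Min_eqI) auto
  show "is_gamma_d2_set V E D \<longleftrightarrow> D = S"
    using assms(2) unfolding is_gamma_d2_set_def g unique_min_2DD_def by auto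
qed

definition private_neighbour :: "'a set set \<Rightarrow> 'a set \<Rightarrow> 'a \<Rightarrow> 'a \<Rightarrow> bool" where
  "private_neighbour E S x w \<longleftrightarrow> adj E x w \<and> w \<notin> S \<and> (\<forall>z\<in>S. near E w z \<longrightarrow> z = x)"

section \<open>Extensions attached at a single vertex\<close>

definition attached_at :: "'a set \<Rightarrow> 'a set set \<Rightarrow> 'a set \<Rightarrow> 'a set set \<Rightarrow> 'a \<Rightarrow> bool" where
  "attached_at V E V' E' v \<longleftrightarrow> V \<subseteq> V' \<and> edges_within V E \<and> edges_within V' E' \<and>
     (\<forall>a\<in>V. \<forall>b\<in>V. adj E' a b \<longleftrightarrow> adj E a b) \<and> (\<forall>a\<in>V. \<forall>z. z \<notin> V \<longrightarrow> adj E' a z \<longrightarrow> a = v)"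

context
  fixes V E V' E' v
  assumes att: "attached_at V E V' E' v"
begin

lemma attached_adj_iff: "a \<in> V \<Longrightarrow> b \<in> V \<Longrightarrow> adj E' a b \<longleftrightarrow> adj E a b"
  using att unfolding attached_at_def by blast

lemma attached_adj: "adj E a b \<Longrightarrow> adj E' a b"
  using att attached_adj_iff unfolding attached_at_def by (blast dest: edges_withinD)

lemma attached_adj_outside: "a \<in> V \<Longrightarrow> z \<notin> V \<Longrightarrow> adj E' a z \<Longrightarrow> a = v"
  using att unfolding attached_at_def by blast

lemma attached_dist2:
  assumes "x \<in> V" "w \<in> V" "dist2 V' E' x w"
  shows "dist2 V E x w"
proof -
  obtain z where z: "adj E' x z" "adj E' z w" and "x \<noteq> w" "\<not> adj E' x w"
    using assms(3) unfolding dist2_def by blast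
  have "z \<in> V"
  proof (rule ccontr)
    assume "z \<notin> V"
    then have "x = v" "w = v"
      using z assms(1,2) attached_adj_outside adj_sym by metis+
    with \<open>x \<noteq> w\<close> show False by simp
  qed
  then show ?thesis
    using z assms \<open>x \<noteq> w\<close> \<open>\<not> adj E' x w\<close> attached_adj_iff
    unfolding dist2_def by blast
qed

lemma attached_near:
  assumes "x \<in> V" "w \<in> V" "near E' x w"
  shows "near E x w \<or> x = w"
proof (cases "adj E' x w")
  case True
  then show ?thesis using assms attached_adj_iff unfolding near_def by blast
next
  case False
  then obtain z where z: "adj E' x z" "adj E' z w"
    using assms(3) unfolding near_def by blast
  show ?thesis
  proof (cases "z \<in> V")
    case True
    then show ?thesis using z assms attached_adj_iff unfolding near_def by blast
  next
    case False
    then have "x = v" "w = v"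
      using z assms(1,2) attached_adj_outside adj_sym by metis+
    then show ?thesis by simp
  qed
qed

lemma attached_near_outside:
  assumes "x \<in> V" "y \<notin> V" "near E' x y"
  shows "(x = v \<or> adj E x v) \<and> near E' v y"
proof (cases "adj E' x y")
  case True
  then show ?thesis using assms attached_adj_outside unfolding near_def by blast
next
  case False
  then obtain z where z: "adj E' x z" "adj E' z y"
    using assms(3) unfolding near_def by blast
  show ?thesis
  proof (cases "z \<in> V")
    case True
    then have "z = v" using z(2) assms(2) attached_adj_outside by blast
    then show ?thesis
      using z True assms(1) attached_adj_iff unfolding near_def by blast
  next
    case False
    then show ?thesis using z assms(1) attached_adj_outside unfolding near_def by blast
  qed
qed

lemma attached_disj_dominated:
  assumes "x \<in> V" "D \<subseteq> V" "finite D" "disj_dominated V E D x"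
  shows "disj_dominated V' E' D x"
proof (rule disj_dominated_transfer[OF assms(4)])
  show "\<exists>y'\<in>D. adj E' x y'" if "y \<in> D" "adj E x y" for y
    using that attached_adj by blast
  show "{w \<in> D. dist2 V E x w} \<subseteq> {w \<in> D. dist2 V' E' x w}"
  proof (intro subsetI)
    fix w assume w: "w \<in> {w \<in> D. dist2 V E x w}"
    then obtain z where z: "z \<in> V" "adj E x z" "adj E z w" and "x \<noteq> w" "\<not> adj E x w"
      unfolding dist2_def by blast
    moreover have "w \<in> V" using w assms(2) by blast
    ultimately show "w \<in> {w \<in> D. dist2 V' E' x w}"
      using w assms(1) att attached_adj attached_adj_iff
      unfolding dist2_def attached_at_def by blast
  qed
qed fact

lemma attached_is_2DD:
  assumes "finite V'" "is_2DD V E D" "D \<subseteq> D'" "D' \<subseteq> V'"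
    and "\<And>x. x \<in> V' - V - D' \<Longrightarrow> disj_dominated V' E' D' x"
  shows "is_2DD V' E' D'"
  unfolding is_2DD_iff
proof (intro conjI ballI)
  show "D' \<subseteq> V'" by fact
  have "D \<subseteq> V" using assms(2) unfolding is_2DD_def by blast
  have "finite D'" using assms(1,4) by (rule finite_subset[rotated])
  then have "finite D" using assms(3) by (rule finite_subset[rotated])
  fix x assume x: "x \<in> V' - D'"
  show "disj_dominated V' E' D' x"
  proof (cases "x \<in> V")
    case True
    then have "disj_dominated V E D x" using x assms(2,3) unfolding is_2DD_iff by blast
    with True \<open>D \<subseteq> V\<close> \<open>finite D\<close> have "disj_dominated V' E' D x"
      by (rule attached_disj_dominated)
    then show ?thesis using assms(3) \<open>finite D'\<close> by (rule disj_dominated_mono)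
  next
    case False
    then show ?thesis using x assms(5) by blast
  qed
qed

lemma attached_restrict_is_2DD:
  assumes v: "v \<in> V" and "finite V" and D': "is_2DD V' E' D'"
  defines "D \<equiv> (D' \<inter> V) \<union> (if \<exists>y\<in>D' - V. near E' v y then {v} else {})"
  shows "is_2DD V E D"
  unfolding is_2DD_iff
proof (intro conjI ballI)
  show "D \<subseteq> V" using v unfolding D_def by auto
  fix x assume x: "x \<in> V - D"
  then have "x \<in> V' - D'" using att unfolding D_def attached_at_def by auto
  then have dom: "disj_dominated V' E' D' x" using D' unfolding is_2DD_iff by blast
  show "disj_dominated V E D x"
  proof (cases "\<exists>y\<in>D' - V. near E' x y")
    case True
    then obtain y where y: "y \<in> D'" "y \<notin> V" "near E' x y" by blast
    then have "x = v \<or> adj E x v" "near E' v y"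
      using attached_near_outside x by blast+
    then have "v \<in> D" using y unfolding D_def by auto
    then show ?thesis using x \<open>x = v \<or> adj E x v\<close> unfolding disj_dominated_def by auto
  next
    case False
    show ?thesis
    proof (rule disj_dominated_transfer[OF dom])
      show "\<exists>y'\<in>D. adj E x y'" if y: "y \<in> D'" "adj E' x y" for y
      proof -
        have "y \<in> V" using y False unfolding near_def by blast
        then show ?thesis using y x attached_adj_iff unfolding D_def by blast
      qed
      show "{w \<in> D'. dist2 V' E' x w} \<subseteq> {w \<in> D. dist2 V E x w}"
      proof (intro subsetI)
        fix w assume w: "w \<in> {w \<in> D'. dist2 V' E' x w}"
        then have "w \<in> D'" "near E' x w" by (auto simp: dist2_imp_near)
        then have "w \<in> V" using False by blast
        then show "w \<in> {w \<in> D. dist2 V E x w}"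
          using w x attached_dist2 unfolding D_def by blast
      qed
      show "finite D" using \<open>finite V\<close> v unfolding D_def by simp
    qed
  qed
qed

lemma attached_private_neighbour:
  assumes "S \<subseteq> V" and priv: "private_neighbour E S x w"
  shows "private_neighbour E' S x w"
  unfolding private_neighbour_def
proof (intro conjI ballI impI)
  have "adj E x w" "w \<notin> S" using priv unfolding private_neighbour_def by blast+
  moreover have "edges_within V E" using att unfolding attached_at_def by blast
  ultimately have "w \<in> V" by (blast dest: edges_withinD)
  show "adj E' x w" using \<open>adj E x w\<close> by (rule attached_adj)
  show "w \<notin> S" by fact
  fix z assume "z \<in> S" "near E' w z"
  then have "near E w z"
    using attached_near[of w z] \<open>w \<in> V\<close> \<open>w \<notin> S\<close> assms(1) by blast
  then show "z = x" using priv \<open>z \<in> S\<close> unfolding private_neighbour_def by blast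
qed

end

section \<open>Hanging a leaf\<close>

locale pendant_attachment =
  fixes V :: "'a set" and E :: "'a set set" and v u :: 'a
  assumes edges_within: "edges_within V E" and finite: "finite V"
    and v: "v \<in> V" and u: "u \<notin> V"
begin

lemma not_adj_u: "\<not> adj E u x" "\<not> adj E x u"
  using u edges_withinD[OF edges_within] by blast+

lemma attached: "attached_at V E (insert u V) (insert {u, v} E) v"
  unfolding attached_at_def
proof (intro conjI ballI allI impI)
  show "edges_within (insert u V) (insert {u, v} E)"
    unfolding edges_within_def adj_insert using edges_withinD[OF edges_within] u v by blast
  show "adj (insert {u, v} E) a b \<longleftrightarrow> adj E a b" if "a \<in> V" "b \<in> V" for a b
    using that u by (auto simp: adj_insert)
  show "a = v" if "a \<in> V" "z \<notin> V" "adj (insert {u, v} E) a z" for a z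
    using that u edges_withinD[OF edges_within] by (auto simp: adj_insert)
qed (use edges_within in auto)

lemma deg_pendant:
  "deg (insert {u, v} E) x = (if x = u then 1 else if x = v then Suc (deg E v) else deg E x)"
proof -
  have "u \<noteq> v" using u v by blast
  then have nb: "nbhd (insert {u, v} E) x =
      nbhd E x \<union> (if x = u then {v} else if x = v then {u} else {})"
    by (auto simp: nbhd_def adj_insert)
  have "nbhd E u = {}" "u \<notin> nbhd E v" "\<And>y. finite (nbhd E y)"
    using not_adj_u finite_nbhd[OF edges_within finite] by (auto simp: nbhd_def)
  then show ?thesis unfolding deg_def nb by simp
qed

lemma leaves_pendant:
  assumes "deg E v \<noteq> 0"
  shows "leaves (insert u V) (insert {u, v} E) = insert u (leaves V E - {v})"
  using assms u by (auto simp: leaves_def deg_pendant)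

lemma swap_not_2DD:
  assumes "S \<subseteq> V" and priv: "private_neighbour E S v w"
  shows "\<not> is_2DD (insert u V) (insert {u, v} E) (insert u (S - {v}))"
proof
  let ?V' = "insert u V" and ?E' = "insert {u, v} E" and ?D = "insert u (S - {v})"
  assume D: "is_2DD ?V' ?E' ?D"
  have w: "adj E v w" "w \<notin> S" "\<forall>z\<in>S. near E w z \<longrightarrow> z = v"
    using priv unfolding private_neighbour_def by blast+
  then have "w \<in> V" "w \<noteq> v" using edges_withinD[OF edges_within] by blast+
  then have "w \<in> ?V' - ?D" using w(2) u by blast
  then have "disj_dominated ?V' ?E' ?D w" using D unfolding is_2DD_iff by blast
  moreover have "\<forall>y\<in>?D. \<not> adj ?E' w y"
  proof
    fix y assume y: "y \<in> ?D"
    show "\<not> adj ?E' w y"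
    proof (cases "y = u")
      case True
      then show ?thesis using \<open>w \<noteq> v\<close> not_adj_u by (auto simp: adj_insert)
    next
      case False
      then have "y \<in> S" "y \<noteq> v" using y by blast+
      then show ?thesis
        using w(3) \<open>w \<in> V\<close> assms(1) attached_adj_iff[OF attached] unfolding near_def by blast
    qed
  qed
  moreover have "{z \<in> ?D. dist2 ?V' ?E' w z} \<subseteq> {u}"
  proof
    fix z assume z: "z \<in> {z \<in> ?D. dist2 ?V' ?E' w z}"
    show "z \<in> {u}"
    proof (rule ccontr)
      assume "z \<notin> {u}"
      then have "z \<in> S" "z \<noteq> v" using z by blast+
      moreover have "dist2 V E w z"
        using attached_dist2[OF attached] z \<open>w \<in> V\<close> \<open>z \<in> S\<close> assms(1) by blast
      ultimately show False using w(3) dist2_imp_near by metis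
    qed
  qed
  ultimately show False using not_disj_dominated[of ?D ?E' w ?V' u] by blast
qed

lemma card_trade_leaf:
  assumes "D \<subseteq> insert u V" "u \<in> D"
  shows "card (insert v (D \<inter> V)) \<le> card D"
    and "card (insert v (D \<inter> V)) = card D \<Longrightarrow> D = insert u (insert v (D \<inter> V) - {v})"
proof -
  have "finite (D \<inter> V)" using finite by simp
  moreover have "D = insert u (D \<inter> V)" "u \<notin> D \<inter> V" using assms u by blast+
  ultimately have "card D = Suc (card (D \<inter> V))" by (metis card_insert_disjoint)
  then show "card (insert v (D \<inter> V)) \<le> card D"
    using \<open>finite (D \<inter> V)\<close> by (simp add: card_insert_if)
  assume "card (insert v (D \<inter> V)) = card D"
  then have "v \<notin> D \<inter> V"
    using \<open>card D = _\<close> \<open>finite (D \<inter> V)\<close> by (auto simp: card_insert_if)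
  then show "D = insert u (insert v (D \<inter> V) - {v})" using \<open>D = insert u (D \<inter> V)\<close> by simp
qed

lemma unique_min_2DD_pendant:
  assumes min: "unique_min_2DD V E S" and "v \<in> S" and priv: "private_neighbour E S v w"
  shows "unique_min_2DD (insert u V) (insert {u, v} E) S"
proof -
  let ?V' = "insert u V" and ?E' = "insert {u, v} E"
  have S: "is_2DD V E S" "S \<subseteq> V" using min unfolding unique_min_2DD_def is_2DD_def by blast+
  have "is_2DD ?V' ?E' S"
  proof (rule attached_is_2DD[OF attached _ S(1) subset_refl])
    show "finite ?V'" "S \<subseteq> ?V'" using finite S(2) by auto
    fix x assume "x \<in> ?V' - V - S"
    then have "x = u" by blast
    then have "adj ?E' x v" by (simp add: adj_insert)
    then show "disj_dominated ?V' ?E' S x"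
      using \<open>v \<in> S\<close> unfolding disj_dominated_def by blast
  qed
  moreover have "card S \<le> card D' \<and> (card D' = card S \<longrightarrow> D' = S)" if D': "is_2DD ?V' ?E' D'" for D'
  proof -
    define R where "R = (D' \<inter> V) \<union> (if u \<in> D' then {v} else {})"
    have "D' \<subseteq> ?V'" "near ?E' v u" using D' unfolding is_2DD_def near_def adj_insert by auto
    then have "(\<exists>y\<in>D' - V. near ?E' v y) \<longleftrightarrow> u \<in> D'" using u by blast
    then have R: "card S \<le> card R" "card R = card S \<Longrightarrow> R = S"
      using attached_restrict_is_2DD[OF attached v finite D'] min
      unfolding R_def unique_min_2DD_def by auto
    show ?thesis
    proof (cases "u \<in> D'")
      case False
      then show ?thesis using R \<open>D' \<subseteq> ?V'\<close> unfolding R_def by (simp add: Int_absorb2 subset_insert)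
    next
      case True
      then have "R = insert v (D' \<inter> V)" unfolding R_def by simp
      note trade = card_trade_leaf[OF \<open>D' \<subseteq> ?V'\<close> True, folded this]
      have "card D' \<noteq> card S"
      proof
        assume "card D' = card S"
        then have "R = S" "D' = insert u (S - {v})" using R trade by (simp_all add: le_antisym)
        then show False using swap_not_2DD[OF S(2) priv] D' by simp
      qed
      then show ?thesis using R(1) trade(1) by simp
    qed
  qed
  ultimately show ?thesis unfolding unique_min_2DD_def by blast
qed

end

section \<open>Hanging a path of length four\<close>

locale path_attachment =
  fixes V :: "'a set" and E :: "'a set set" and v u1 u2 u3 u4 :: 'a
  assumes edges_within: "edges_within V E" and finite: "finite V" and v: "v \<in> V"
    and distinct: "distinct [u1, u2, u3, u4]"
    and new: "u1 \<notin> V" "u2 \<notin> V" "u3 \<notin> V" "u4 \<notin> V"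
begin

abbreviation "V' \<equiv> insert u1 (insert u2 (insert u3 (insert u4 V)))"
abbreviation "E' \<equiv> insert {u1, v} (insert {u1, u2} (insert {u2, u3} (insert {u3, u4} E)))"

lemma adj_path_old: "x \<in> V \<Longrightarrow> adj E' x y \<longleftrightarrow> adj E x y \<or> (x = v \<and> y = u1)"
  using new by (auto simp: adj_insert)

lemma adj_path_new:
  "adj E' u1 y \<longleftrightarrow> y = v \<or> y = u2" "adj E' u2 y \<longleftrightarrow> y = u1 \<or> y = u3"
  "adj E' u3 y \<longleftrightarrow> y = u2 \<or> y = u4" "adj E' u4 y \<longleftrightarrow> y = u3"
  using new distinct v edges_withinD[OF edges_within] by (auto simp: adj_insert)

lemma adj_path_new_sym:
  "adj E' y u1 \<longleftrightarrow> y = v \<or> y = u2" "adj E' y u2 \<longleftrightarrow> y = u1 \<or> y = u3"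
  "adj E' y u3 \<longleftrightarrow> y = u2 \<or> y = u4" "adj E' y u4 \<longleftrightarrow> y = u3"
  by (subst adj_sym, rule adj_path_new)+

lemma attached: "attached_at V E V' E' v"
  unfolding attached_at_def
proof (intro conjI ballI allI impI)
  show "edges_within V' E'"
    unfolding edges_within_def
  proof (intro allI impI)
    fix x y assume xy: "adj E' x y"
    have "x \<in> V'" using xy v edges_withinD[OF edges_within] by (auto simp: adj_insert)
    then consider "x \<in> V" | "x = u1" | "x = u2" | "x = u3" | "x = u4" by blast
    then show "x \<in> V' \<and> y \<in> V' \<and> x \<noteq> y"
      using xy new distinct v edges_withinD[OF edges_within]
      by cases (auto simp: adj_path_old adj_path_new)
  qed
  show "adj E' a b \<longleftrightarrow> adj E a b" if "a \<in> V" "b \<in> V" for a b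
    using that new adj_path_old by blast
  show "a = v" if "a \<in> V" "z \<notin> V" "adj E' a z" for a z
    using that adj_path_old edges_withinD[OF edges_within] by blast
qed (use edges_within in auto)

lemma near_v_outside: "y \<notin> V \<Longrightarrow> near E' v y \<longleftrightarrow> y = u1 \<or> y = u2"
  using v new distinct edges_withinD[OF edges_within]
  by (auto simp: near_def adj_path_old adj_path_new)

lemma deg_path_old: "x \<in> V \<Longrightarrow> deg E' x = (if x = v then Suc (deg E v) else deg E x)"
proof -
  assume x: "x \<in> V"
  then have nb: "nbhd E' x = nbhd E x \<union> (if x = v then {u1} else {})"
    by (auto simp: nbhd_def adj_path_old)
  have "u1 \<notin> nbhd E x" "finite (nbhd E x)"
    using new edges_withinD[OF edges_within] finite_nbhd[OF edges_within finite]
    by (auto simp: nbhd_def)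
  then show ?thesis unfolding deg_def nb by (cases "x = v") simp_all
qed

lemma deg_path_new: "deg E' u1 = 2" "deg E' u2 = 2" "deg E' u3 = 2" "deg E' u4 = 1"
proof -
  have "nbhd E' u1 = {v, u2}" "nbhd E' u2 = {u1, u3}" "nbhd E' u3 = {u2, u4}" "nbhd E' u4 = {u3}"
    by (auto simp: nbhd_def adj_path_new)
  moreover have "v \<noteq> u2" using v new by blast
  ultimately show "deg E' u1 = 2" "deg E' u2 = 2" "deg E' u3 = 2" "deg E' u4 = 1"
    using distinct by (simp_all add: deg_def)
qed

lemma leaves_path:
  assumes "deg E v \<noteq> 0"
  shows "leaves V' E' = insert u4 (leaves V E - {v})"
proof (rule set_eqI)
  fix x
  show "x \<in> leaves V' E' \<longleftrightarrow> x \<in> insert u4 (leaves V E - {v})"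
  proof (cases "x \<in> V")
    case True
    then show ?thesis using assms new by (auto simp: leaves_def deg_path_old)
  next
    case False
    then show ?thesis using distinct by (auto simp: leaves_def deg_path_new)
  qed
qed

lemma is_2DD_path:
  assumes S: "is_2DD V E S" and a: "a \<in> S" "adj E v a"
  shows "is_2DD V' E' (insert u3 S)"
proof (rule attached_is_2DD[OF attached _ S])
  show "finite V'" using finite by simp
  show "S \<subseteq> insert u3 S" by blast
  show "insert u3 S \<subseteq> V'" using S unfolding is_2DD_def by blast
  fix x assume x: "x \<in> V' - V - insert u3 S"
  then consider "x = u1" | "x = u2" | "x = u4" by blast
  then show "disj_dominated V' E' (insert u3 S) x"
  proof cases
    case 1
    have "a \<in> V" "a \<noteq> v" using a edges_withinD[OF edges_within] by blast+
    then have "dist2 V' E' u1 a" "dist2 V' E' u1 u3"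
      using a(2) v new distinct unfolding dist2_def by (auto simp: adj_path_new adj_path_old)
    then have "{a, u3} \<subseteq> {w \<in> insert u3 S. dist2 V' E' u1 w}" using a(1) by blast
    moreover have "finite (insert u3 S)" using S finite is_2DD_finite by blast
    ultimately have "card {a, u3} \<le> card {w \<in> insert u3 S. dist2 V' E' u1 w}"
      by (intro card_mono) auto
    moreover have "a \<noteq> u3" using \<open>a \<in> V\<close> new by blast
    ultimately show ?thesis using 1 unfolding disj_dominated_def by simp
  qed (auto simp: disj_dominated_def adj_path_new)
qed

lemma path_end_in_2DD:
  assumes D: "is_2DD V' E' D"
  shows "u3 \<in> D \<or> u4 \<in> D"
proof (rule ccontr)
  assume none: "\<not> (u3 \<in> D \<or> u4 \<in> D)"
  then have "disj_dominated V' E' D u4" using D unfolding is_2DD_iff by blast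
  moreover have "\<forall>y\<in>D. \<not> adj E' u4 y" using none by (auto simp: adj_path_new)
  moreover have "{w \<in> D. dist2 V' E' u4 w} \<subseteq> {u2}"
    by (auto simp: dist2_def adj_path_new)
  ultimately show False using not_disj_dominated[of D E' u4 V' u2] by blast
qed

lemma path_middle_in_2DD:
  assumes D: "is_2DD V' E' D" and "v \<notin> D" "u1 \<notin> D" "u2 \<notin> D"
  shows "u3 \<in> D"
proof (rule ccontr)
  assume "u3 \<notin> D"
  have "disj_dominated V' E' D u2" using D assms(4) unfolding is_2DD_iff by blast
  moreover have "\<forall>y\<in>D. \<not> adj E' u2 y" using assms(3) \<open>u3 \<notin> D\<close> by (auto simp: adj_path_new)
  moreover have "{w \<in> D. dist2 V' E' u2 w} \<subseteq> {u4}"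
    using assms(2) by (auto simp: dist2_def adj_path_new)
  ultimately show False using not_disj_dominated[of D E' u2 V' u4] by blast
qed

lemma card_path_split:
  assumes "D \<subseteq> V'"
  shows "card D = card (D \<inter> V) + card (D \<inter> {u1, u2}) + card (D \<inter> {u3, u4})"
proof -
  have "D = (D \<inter> V) \<union> (D \<inter> {u1, u2}) \<union> (D \<inter> {u3, u4})" using assms by blast
  moreover have "card ((D \<inter> V) \<union> (D \<inter> {u1, u2}) \<union> (D \<inter> {u3, u4}))
      = card (D \<inter> V) + card (D \<inter> {u1, u2}) + card (D \<inter> {u3, u4})"
    using finite new distinct by (subst card_Un_disjoint; auto simp: card_Un_disjoint)+
  ultimately show ?thesis by simp
qed

lemma card_path_restriction:
  assumes D: "is_2DD V' E' D"
  shows "Suc (card ((D \<inter> V) \<union> (if u1 \<in> D \<or> u2 \<in> D then {v} else {}))) \<le> card D"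
    (is "Suc (card ?R) \<le> _")
proof -
  have "card ?R \<le> card (D \<inter> V) + card (D \<inter> {u1, u2})"
  proof (cases "u1 \<in> D \<or> u2 \<in> D")
    case True
    then have "1 \<le> card (D \<inter> {u1, u2})" by (auto simp: Suc_le_eq card_gt_0_iff)
    moreover have "card ?R \<le> card (D \<inter> V) + 1" using True card_Un_le[of "D \<inter> V" "{v}"] by simp
    ultimately show ?thesis by linarith
  qed simp
  moreover have "1 \<le> card (D \<inter> {u3, u4})"
    using path_end_in_2DD[OF D] by (auto simp: Suc_le_eq card_gt_0_iff)
  moreover have "D \<subseteq> V'" using D unfolding is_2DD_def by blast
  ultimately show ?thesis using card_path_split by fastforce
qed

lemma unique_min_2DD_path:
  assumes min: "unique_min_2DD V E S" and "v \<notin> S" and a: "a \<in> S" "adj E v a"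
  shows "unique_min_2DD V' E' (insert u3 S)"
proof -
  have S: "is_2DD V E S" "S \<subseteq> V" using min unfolding unique_min_2DD_def is_2DD_def by blast+
  have "finite S" using S(2) finite by (rule finite_subset)
  moreover have "u3 \<notin> S" using S(2) new by blast
  ultimately have card_S': "card (insert u3 S) = Suc (card S)" by simp
  have "card (insert u3 S) \<le> card D \<and> (card D = card (insert u3 S) \<longrightarrow> D = insert u3 S)"
    if D: "is_2DD V' E' D" for D
  proof -
    define R where "R = (D \<inter> V) \<union> (if u1 \<in> D \<or> u2 \<in> D then {v} else {})"
    have "(\<exists>y\<in>D - V. near E' v y) \<longleftrightarrow> u1 \<in> D \<or> u2 \<in> D" using near_v_outside new by blast
    then have R: "card S \<le> card R" "card R = card S \<Longrightarrow> R = S"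
      using attached_restrict_is_2DD[OF attached v finite D] min
      unfolding R_def unique_min_2DD_def by auto
    have bound: "Suc (card R) \<le> card D" using card_path_restriction[OF D] unfolding R_def .
    show ?thesis
    proof (intro conjI impI)
      show "card (insert u3 S) \<le> card D" using bound R(1) card_S' by linarith
      assume eq: "card D = card (insert u3 S)"
      then have "R = S" using bound R card_S' by simp
      then have "u1 \<notin> D" "u2 \<notin> D" "D \<inter> V = S"
        using \<open>v \<notin> S\<close> unfolding R_def by (auto split: if_splits)
      moreover have "D \<subseteq> V'" using D unfolding is_2DD_def by blast
      ultimately have "card (D \<inter> {u3, u4}) = 1" "u3 \<in> D"
        using card_path_split eq card_S' path_middle_in_2DD[OF D] \<open>v \<notin> S\<close> v by auto
      then have "D \<inter> {u3, u4} = {u3}" using distinct by (auto simp: card_Suc_eq)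
      then show "D = insert u3 S"
        using \<open>D \<subseteq> V'\<close> \<open>D \<inter> V = S\<close> \<open>u1 \<notin> D\<close> \<open>u2 \<notin> D\<close> by blast
    qed
  qed
  then show ?thesis using is_2DD_path[OF S(1) a] unfolding unique_min_2DD_def by blast
qed

lemma private_neighbour_path:
  assumes "S \<subseteq> V" "private_neighbour E S x w"
  shows "private_neighbour E' (insert u3 S) x w"
proof -
  have "w \<in> V" using assms(2) edges_withinD[OF edges_within] unfolding private_neighbour_def by blast
  then have "\<not> near E' w u3" "w \<noteq> u3"
    using new distinct edges_withinD[OF edges_within]
    by (auto simp: near_def adj_path_old adj_path_new_sym)
  then show ?thesis
    using attached_private_neighbour[OF attached assms] unfolding private_neighbour_def by blast
qed

lemma private_neighbour_u3: "S \<subseteq> V \<Longrightarrow> private_neighbour E' (insert u3 S) u3 u4"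
  using new distinct by (auto simp: private_neighbour_def near_def adj_path_new adj_path_new_sym)

end

section \<open>The family \<open>\<T>\<^sub>1\<close>\<close>

lemma unique_min_2DD_P3:
  assumes "distinct [a, b, c]"
  shows "unique_min_2DD {a, b, c} {{a, b}, {b, c}} {b}"
proof (rule unique_min_2DDI)
  let ?V = "{a, b, c}" and ?E = "{{a, b}, {b, c}}"
  have adj: "adj ?E x y \<longleftrightarrow> {x, y} = {a, b} \<or> {x, y} = {b, c}" for x y
    by (simp add: adj_def)
  show "is_2DD ?V ?E {b}"
    using assms unfolding is_2DD_iff disj_dominated_def adj by (auto simp: doubleton_eq_iff)
  fix D assume D: "is_2DD ?V ?E D"
  have "D \<noteq> {}"
  proof
    assume "D = {}"
    then have "disj_dominated ?V ?E {} a" using D unfolding is_2DD_iff by blast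
    then show False unfolding disj_dominated_def by simp
  qed
  moreover have "finite D" using is_2DD_finite[OF _ D] by simp
  ultimately show "card {b} \<le> card D" by (simp add: Suc_le_eq card_gt_0_iff)
  assume "card D = card {b}"
  then have "card D = 1" by simp
  then obtain z where z: "D = {z}" by (rule card_1_singletonE)
  show "D = {b}"
  proof (rule ccontr)
    assume "D \<noteq> {b}"
    then obtain t where t: "t \<in> ?V" "t \<noteq> z" "\<not> adj ?E t z"
      using z D assms unfolding is_2DD_def adj by (auto simp: doubleton_eq_iff)
    then have "disj_dominated ?V ?E D t" using D z unfolding is_2DD_iff by blast
    moreover have "\<forall>y\<in>D. \<not> adj ?E t y" "{w \<in> D. dist2 ?V ?E t w} \<subseteq> {z}" using t z by auto
    ultimately show False using not_disj_dominated by metis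
  qed
qed

definition status_set :: "'a set \<Rightarrow> ('a \<Rightarrow> status) \<Rightarrow> status \<Rightarrow> 'a set" where
  "status_set V sta s = {x \<in> V. sta x = s}"

lemma status_set_insert:
  "status_set (insert u V) sta s = (if sta u = s then insert u (status_set V sta s) else status_set V sta s)"
  by (auto simp: status_set_def)

lemma status_set_cong: "\<forall>x\<in>V. sta' x = sta x \<Longrightarrow> status_set V sta' s = status_set V sta s"
  by (auto simp: status_set_def)

lemma T1_graph: "T1 V E sta \<Longrightarrow> finite V \<and> edges_within V E"
proof (induction rule: T1.induct)
  case (base a b c sta)
  then show ?case by (auto simp: edges_within_def adj_def doubleton_eq_iff)
next
  case (op1 V E sta v u sta')
  then interpret pendant_attachment V E v u by unfold_locales auto
  have "edges_within (insert u V) (insert {u, v} E)"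
    using attached unfolding attached_at_def by blast
  then show ?case using finite by simp
next
  case (op3 V E sta v u1 u2 u3 u4 sta')
  then interpret path_attachment V E v u1 u2 u3 u4 by unfold_locales auto
  have "edges_within V' E'" using attached unfolding attached_at_def by blast
  then show ?case using finite by simp
qed

lemma T1_count:
  "T1 V E sta \<Longrightarrow> card V + 3 = 4 * card (status_set V sta SA) + card (leaves V E)
     \<and> (\<forall>x\<in>status_set V sta SA. 2 \<le> deg E x)"
proof (induction rule: T1.induct)
  case (base a b c sta)
  let ?E = "{{a, b}, {b, c}}"
  have "nbhd ?E a = {b}" "nbhd ?E b = {a, c}" "nbhd ?E c = {b}"
    using base.hyps(1) by (auto simp: nbhd_def adj_def doubleton_eq_iff)
  then have deg: "deg ?E a = 1" "deg ?E b = 2" "deg ?E c = 1"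
    using base.hyps(1) by (simp_all add: deg_def)
  have "status_set {a, b, c} sta SA = {b}" using base.hyps by (auto simp: status_set_def)
  moreover have "leaves {a, b, c} ?E = {a, c}" using deg by (auto simp: leaves_def)
  ultimately show ?case using base.hyps(1) deg by simp
next
  case (op1 V E sta v u sta')
  then interpret pendant_attachment V E v u using T1_graph by unfold_locales auto
  let ?S = "status_set V sta SA"
  have S': "status_set (insert u V) sta' SA = ?S"
    using op1.hyps(6) by (simp add: status_set_insert status_set_cong[OF op1.hyps(5)])
  have "2 \<le> deg E v" using op1.IH op1.hyps(2,3) by (simp add: status_set_def)
  then have "leaves (insert u V) (insert {u, v} E) = insert u (leaves V E)"
    using leaves_pendant by (auto simp: leaves_def)
  moreover have "finite (leaves V E)" "u \<notin> leaves V E" using finite u by (auto simp: leaves_def)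
  moreover have "\<forall>x\<in>?S. 2 \<le> deg (insert {u, v} E) x"
    using op1.IH u by (auto simp: deg_pendant status_set_def)
  ultimately show ?case using op1.IH finite u S' by simp
next
  case (op3 V E sta v u1 u2 u3 u4 sta')
  then interpret path_attachment V E v u1 u2 u3 u4 using T1_graph by unfold_locales auto
  let ?S = "status_set V sta SA"
  have S': "status_set V' sta' SA = insert u3 ?S"
    using op3.hyps(11-14) distinct by (simp add: status_set_insert status_set_cong[OF op3.hyps(10)])
  have "card (insert u3 ?S) = Suc (card ?S)"
    using finite new by (simp add: status_set_def)
  moreover have "card (leaves V' E') = card (leaves V E)"
  proof -
    have "v \<in> leaves V E" "finite (leaves V E)" "u4 \<notin> leaves V E"
      using op3.hyps(2,4) finite new by (auto simp: leaves_def)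
    moreover from this have "0 < card (leaves V E)" using card_gt_0_iff by blast
    ultimately show ?thesis using leaves_path op3.hyps(4) by simp
  qed
  moreover have "card V' = card V + 4" using finite new distinct by simp
  ultimately have "card V' + 3 = 4 * card (status_set V' sta' SA) + card (leaves V' E')"
    using op3.IH S' by simp
  moreover have "\<forall>x\<in>status_set V' sta' SA. 2 \<le> deg E' x"
    using op3.IH unfolding S' by (auto simp: deg_path_old deg_path_new status_set_def)
  moreover have "V \<union> {u1, u2, u3, u4} = V'" "E \<union> {{u1, v}, {u1, u2}, {u2, u3}, {u3, u4}} = E'"
    by auto
  ultimately show ?case by simp
qed

lemma T1_domination:
  "T1 V E sta \<Longrightarrow> unique_min_2DD V E (status_set V sta SA)
     \<and> (\<forall>x\<in>status_set V sta SA. \<exists>w. private_neighbour E (status_set V sta SA) x w)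
     \<and> (\<forall>c\<in>status_set V sta SC. \<exists>a\<in>status_set V sta SA. adj E c a)"
proof (induction rule: T1.induct)
  case (base a b c sta)
  let ?E = "{{a, b}, {b, c}}"
  have S: "status_set {a, b, c} sta SA = {b}" and C: "status_set {a, b, c} sta SC = {a, c}"
    using base.hyps by (auto simp: status_set_def)
  have "adj ?E b a" "adj ?E a b" "adj ?E c b" "a \<noteq> b"
    using base.hyps(1) by (auto simp: adj_def insert_commute)
  moreover from this have "private_neighbour ?E {b} b a" by (simp add: private_neighbour_def)
  ultimately show ?case unfolding S C using unique_min_2DD_P3[OF base.hyps(1)] by blast
next
  case (op1 V E sta v u sta')
  then interpret pendant_attachment V E v u using T1_graph by unfold_locales auto
  let ?S = "status_set V sta SA" and ?E' = "insert {u, v} E"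
  have S': "status_set (insert u V) sta' SA = ?S"
    and C': "status_set (insert u V) sta' SC = insert u (status_set V sta SC)"
    using op1.hyps(6) by (simp_all add: status_set_insert status_set_cong[OF op1.hyps(5)])
  have "v \<in> ?S" "?S \<subseteq> V" using op1.hyps(2,3) by (auto simp: status_set_def)
  then obtain w where "private_neighbour E ?S v w" using op1.IH by blast
  then have "unique_min_2DD (insert u V) ?E' ?S"
    using unique_min_2DD_pendant op1.IH \<open>v \<in> ?S\<close> by blast
  moreover have "\<forall>x\<in>?S. \<exists>w. private_neighbour ?E' ?S x w"
    using op1.IH attached_private_neighbour[OF attached \<open>?S \<subseteq> V\<close>] by blast
  moreover have "\<forall>c\<in>insert u (status_set V sta SC). \<exists>a\<in>?S. adj ?E' c a"
    using op1.IH attached_adj[OF attached] \<open>v \<in> ?S\<close> by (auto simp: adj_insert)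
  ultimately show ?case unfolding S' C' by blast
next
  case (op3 V E sta v u1 u2 u3 u4 sta')
  then interpret path_attachment V E v u1 u2 u3 u4 using T1_graph by unfold_locales auto
  let ?S = "status_set V sta SA"
  have S': "status_set V' sta' SA = insert u3 ?S"
    and C': "status_set V' sta' SC = insert u4 (status_set V sta SC)"
    using op3.hyps(11-14) distinct
    by (simp_all add: status_set_insert status_set_cong[OF op3.hyps(10)])
  have "v \<notin> ?S" "?S \<subseteq> V" using op3.hyps(3) by (auto simp: status_set_def)
  have "adj E' u4 u3" by (simp add: adj_path_new)
  obtain a where "a \<in> ?S" "adj E v a"
    using op3.IH op3.hyps(2,3) by (auto simp: status_set_def)
  then have "unique_min_2DD V' E' (insert u3 ?S)"
    using unique_min_2DD_path op3.IH \<open>v \<notin> ?S\<close> by blast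
  moreover have "\<forall>x\<in>insert u3 ?S. \<exists>w. private_neighbour E' (insert u3 ?S) x w"
    using op3.IH private_neighbour_path[OF \<open>?S \<subseteq> V\<close>] private_neighbour_u3[OF \<open>?S \<subseteq> V\<close>]
    by blast
  moreover have "\<forall>c\<in>insert u4 (status_set V sta SC). \<exists>a\<in>insert u3 ?S. adj E' c a"
    using op3.IH attached_adj[OF attached] \<open>adj E' u4 u3\<close> by blast
  moreover have "V \<union> {u1, u2, u3, u4} = V'" "E \<union> {{u1, v}, {u1, u2}, {u2, u3}, {u3, u4}} = E'"
    by auto
  ultimately show ?case by (simp only: S' C')
qed

theorem lemma3p2:
  fixes V :: "'a set" and E :: "'a set set" and sta :: "'a \<Rightarrow> status"
  assumes "is_tree V E"
    and "card V \<ge> 3"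
    and "T1 V E sta"
  shows "gamma_d2 V E = card {v \<in> V. sta v = SA}
       \<and> real (card {v \<in> V. sta v = SA}) = (real (card V) - real (card (leaves V E)) + 3) / 4
       \<and> (\<forall>D. is_gamma_d2_set V E D \<longleftrightarrow> D = {v \<in> V. sta v = SA})"
proof -
  have "finite V" using T1_graph[OF assms(3)] by blast
  moreover have "unique_min_2DD V E {v \<in> V. sta v = SA}"
    using T1_domination[OF assms(3)] unfolding status_set_def by blast
  moreover have "card V + 3 = 4 * card {v \<in> V. sta v = SA} + card (leaves V E)"
    using T1_count[OF assms(3)] unfolding status_set_def by blast
  then have "real (card V) + 3 = 4 * real (card {v \<in> V. sta v = SA}) + real (card (leaves V E))"
    by (metis of_nat_add of_nat_mult of_nat_numeral)
  ultimately show ?thesis using gamma_d2_unique_min[of V E "{v \<in> V. sta v = SA}"] by simp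
qed

end
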